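(* For every positive integer $k$, there exist a binary matrix $A_k$ and binary column vectors $x_1,\dots,x_k$ such that $R_{binary}(A_k|x_i)=R_{binary}(A_k)=4$ for all $1\le i\le k$, but $R_{binary}(A_k|x_1,\dots,x_k)=k+3$.
   Context: For a binary $n\times m$ matrix $A$, $R_{binary}(A)$ is the least $k$ such that $A=UV$ with $U\in\{0,1\}^{n\times k}$, $V\in\{0,1\}^{k\times m}$, ordinary arithmetic. $(A|x_1,\dots,x_t)$ denotes $A$ with the columns $x_1,\dots,x_t$ appended on the right. *)

theory Defs
  imports Main
begin

text \<open>An n x m matrix is represented as a function A :: nat => nat => nat,
  entry (i,j) = A i j, only meaningful for i < n, j < m.\<close>

definition binary_matrix :: "nat \<Rightarrow> nat \<Rightarrow> (nat \<Rightarrow> nat \<Rightarrow> nat) \<Rightarrow> bool" where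
  "binary_matrix n m A \<longleftrightarrow> (\<forall>i<n. \<forall>j<m. A i j \<in> {0, 1})"

definition has_binary_factorization ::
  "nat \<Rightarrow> nat \<Rightarrow> nat \<Rightarrow> (nat \<Rightarrow> nat \<Rightarrow> nat) \<Rightarrow> bool" where
  "has_binary_factorization n m k A \<longleftrightarrow>
     (\<exists>U V. binary_matrix n k U \<and> binary_matrix k m V \<and>
        (\<forall>i<n. \<forall>j<m. A i j = (\<Sum>l<k. U i l * V l j)))"

definition binary_rank :: "nat \<Rightarrow> nat \<Rightarrow> (nat \<Rightarrow> nat \<Rightarrow> nat) \<Rightarrow> nat" where
  "binary_rank n m A = (LEAST k. has_binary_factorization n m k A)"

text \<open>(A | x_0, ..., x_{t-1}): the n x m matrix A with t columns appended;
  X l i is the i-th entry of the l-th appended column.\<close>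
definition append_cols ::
  "nat \<Rightarrow> (nat \<Rightarrow> nat \<Rightarrow> nat) \<Rightarrow> (nat \<Rightarrow> nat \<Rightarrow> nat) \<Rightarrow> nat \<Rightarrow> nat \<Rightarrow> nat" where
  "append_cols m A X = (\<lambda>i j. if j < m then A i j else X (j - m) i)"

end

theory Submission
  imports Defs
begin

text \<open>The four top rows of \<open>A\<close> are the lines of a \<open>2 \<times> 2\<close> grid whose cells are the four
  columns, and every further row is all ones, i.e. both row 0 + row 1 and row 2 + row 3.
  Four entries of the top block form a fooling set, and the four lines, each all-ones row
  attached to one of the two pairs of lines, form a partition into four rectangles.
  The column \<open>x\<^sub>l\<close> has its ones in rows 0 and \<open>4 + l\<close>; attaching row \<open>4 + l\<close> to the
  pair of rows 0, 1 lets the rectangle of row 0 absorb \<open>x\<^sub>l\<close>. Only one all-ones row can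
  be treated this way for all columns at once: the diagonal entries \<open>(4 + l, x\<^sub>l)\<close> and
  three entries of the top block form a fooling set of size \<open>k + 3\<close>, matched by the
  rectangles \<open>{0, 4 + l} \<times> {x\<^sub>l}\<close> for \<open>l \<ge> 1\<close>.\<close>

definition fooling_set :: "nat \<Rightarrow> nat \<Rightarrow> (nat \<Rightarrow> nat \<Rightarrow> nat) \<Rightarrow> (nat \<times> nat) set \<Rightarrow> bool" where
  "fooling_set n m M F \<longleftrightarrow>
     F \<subseteq> {..<n} \<times> {..<m} \<and> (\<forall>(i, j) \<in> F. M i j \<noteq> 0) \<and>
     (\<forall>(i, j) \<in> F. \<forall>(i', j') \<in> F. (i, j) \<noteq> (i', j') \<longrightarrow> M i j' = 0 \<or> M i' j = 0)"

text \<open>Every entry of a fooling set needs a rank-one summand of its own: a summand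
  nonzero at two of them would make both crossing entries nonzero.\<close>
lemma fooling_set_card_le:
  assumes fool: "fooling_set n m M F" and fact: "has_binary_factorization n m K M"
  shows "card F \<le> K"
proof -
  obtain U V where eq: "\<And>i j. i < n \<Longrightarrow> j < m \<Longrightarrow> M i j = (\<Sum>l<K. U i l * V l j)"
    using fact unfolding has_binary_factorization_def by blast
  have summand_le: "U i l * V l j \<le> M i j" if "i < n" "j < m" "l < K" for i j l
    using that by (simp add: eq) (rule member_le_sum, auto)
  have "\<forall>p \<in> F. \<exists>l<K. U (fst p) l * V l (snd p) \<noteq> 0"
  proof
    fix p assume "p \<in> F"
    with fool have "M (fst p) (snd p) \<noteq> 0" "fst p < n" "snd p < m"
      unfolding fooling_set_def by auto
    then show "\<exists>l<K. U (fst p) l * V l (snd p) \<noteq> 0"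
      using eq by (metis (no_types, lifting) lessThan_iff sum.neutral)
  qed
  then obtain g where g: "\<And>p. p \<in> F \<Longrightarrow> g p < K \<and> U (fst p) (g p) * V (g p) (snd p) \<noteq> 0"
    by metis
  have "inj_on g F"
  proof (rule inj_onI, rule ccontr)
    fix p q assume pq: "p \<in> F" "q \<in> F" "g p = g q" "p \<noteq> q"
    with fool have bounds: "fst p < n" "snd p < m" "fst q < n" "snd q < m"
      unfolding fooling_set_def by auto
    have "U (fst p) (g p) * V (g p) (snd q) \<noteq> 0" "U (fst q) (g p) * V (g p) (snd p) \<noteq> 0"
      using g[OF pq(1)] g[OF pq(2)] pq(3) by auto
    then have "M (fst p) (snd q) \<noteq> 0" "M (fst q) (snd p) \<noteq> 0"
      using summand_le bounds g[OF pq(1)] by (metis le_0_eq)+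
    moreover have "M (fst p) (snd q) = 0 \<or> M (fst q) (snd p) = 0"
      using fool pq(1,2,4) unfolding fooling_set_def by (cases p, cases q) fastforce
    ultimately show False by simp
  qed
  moreover have "g ` F \<subseteq> {..<K}" using g by auto
  ultimately have "card F \<le> card {..<K}" by (intro card_inj_on_le) auto
  then show ?thesis by simp
qed

lemma has_binary_factorization_rectangle_sum:
  assumes "finite L"
    and "\<And>i j. i < n \<Longrightarrow> j < m \<Longrightarrow> M i j = card {l \<in> L. R l i \<and> C l j}"
  shows "has_binary_factorization n m (card L) M"
proof -
  obtain h where h: "bij_betw h {0..<card L} L"
    using ex_bij_betw_nat_finite[OF \<open>finite L\<close>] by blast
  show ?thesis
    unfolding has_binary_factorization_def
  proof (intro exI conjI allI impI)
    show "binary_matrix n (card L) (\<lambda>i l. of_bool (R (h l) i))"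
      "binary_matrix (card L) m (\<lambda>l j. of_bool (C (h l) j))"
      unfolding binary_matrix_def by auto
    fix i j assume "i < n" "j < m"
    have "(\<Sum>l<card L. of_bool (R (h l) i) * of_bool (C (h l) j))
        = (\<Sum>l\<in>L. of_bool (R l i \<and> C l j) :: nat)"
      unfolding of_bool_conj[symmetric] atLeast0LessThan[symmetric]
      by (rule sum.reindex_bij_betw[OF h])
    also have "\<dots> = M i j"
      using assms \<open>i < n\<close> \<open>j < m\<close> by (simp add: Int_def)
    finally show "M i j = (\<Sum>l<card L. of_bool (R (h l) i) * of_bool (C (h l) j))" ..
  qed
qed

lemma has_binary_factorization_rectangle_partition:
  assumes "finite L"
    and cover: "\<And>i j. i < n \<Longrightarrow> j < m \<Longrightarrow> M i j = of_bool (\<exists>l\<in>L. R l i \<and> C l j)"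
    and disjoint: "\<And>i j l l'. \<lbrakk>i < n; j < m; l \<in> L; l' \<in> L; R l i; C l j; R l' i; C l' j\<rbrakk> \<Longrightarrow> l = l'"
  shows "has_binary_factorization n m (card L) M"
proof (rule has_binary_factorization_rectangle_sum[OF \<open>finite L\<close>])
  fix i j assume ij: "i < n" "j < m"
  show "M i j = card {l \<in> L. R l i \<and> C l j}"
  proof (cases "\<exists>l\<in>L. R l i \<and> C l j")
    case True
    then obtain l where "l \<in> L" "R l i" "C l j" by blast
    with disjoint ij have "{l \<in> L. R l i \<and> C l j} = {l}" by blast
    with cover[OF ij] True show ?thesis by simp
  next
    case False
    then have "card {l \<in> L. R l i \<and> C l j} = 0" using \<open>finite L\<close> by auto
    moreover have "M i j = 0" using cover[OF ij] False by simp
    ultimately show ?thesis by simp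
  qed
qed

lemma binary_rank_eqI:
  assumes "has_binary_factorization n m r M"
    and "\<And>K. has_binary_factorization n m K M \<Longrightarrow> r \<le> K"
  shows "binary_rank n m M = r"
  unfolding binary_rank_def using assms by (intro Least_equality) auto

text \<open>Column \<open>j < 4\<close> is the grid cell \<open>(j div 2, j mod 2)\<close>; rows 0, 1 are the grid rows and
  rows 2, 3 the grid columns.\<close>
definition base_matrix :: "nat \<Rightarrow> nat \<Rightarrow> nat" where
  "base_matrix i j = of_bool (4 \<le> i \<or> i = j div 2 \<or> i = j mod 2 + 2)"

definition extra_column :: "nat \<Rightarrow> nat \<Rightarrow> nat" where
  "extra_column l i = of_bool (i = 0 \<or> i = 4 + l)"

lemma less_4_cases:
  fixes j :: nat
  assumes "j < 4"
  obtains "j = 0" | "j = 1" | "j = 2" | "j = 3"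
  using assms by linarith

lemma base_matrix_same_half:
  assumes "j < 4" "t \<le> 3" "t' \<le> 3" "t \<le> 1 \<longleftrightarrow> t' \<le> 1"
    and "base_matrix t j \<noteq> 0" "base_matrix t' j \<noteq> 0"
  shows "t = t'"
  using assms unfolding base_matrix_def by auto

lemma binary_rank_base_matrix:
  assumes "4 \<le> n"
  shows "binary_rank n 4 base_matrix = 4"
proof (rule binary_rank_eqI)
  let ?R = "\<lambda>t i. i = t \<or> (4 \<le> i \<and> t \<le> 1)"
  let ?C = "\<lambda>t j. base_matrix t j \<noteq> 0"
  have "has_binary_factorization n 4 (card {0, 1, 2, 3 :: nat}) base_matrix"
  proof (rule has_binary_factorization_rectangle_partition[where R = ?R and C = ?C])
    fix i j :: nat assume "j < 4"
    then show "base_matrix i j = of_bool (\<exists>t\<in>{0, 1, 2, 3}. ?R t i \<and> ?C t j)"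
      by (elim less_4_cases) (simp_all add: base_matrix_def)
  next
    fix i j t t' :: nat
    assume "j < 4" and t: "t \<in> {0, 1, 2, 3}" "t' \<in> {0, 1, 2, 3}"
      and R: "?R t i" "?R t' i" and C: "?C t j" "?C t' j"
    from R t have "t \<le> 3" "t' \<le> 3" "t = t' \<or> (t \<le> 1 \<longleftrightarrow> t' \<le> 1)" by auto
    with C \<open>j < 4\<close> show "t = t'" using base_matrix_same_half by blast
  qed simp
  then show "has_binary_factorization n 4 4 base_matrix" by (simp add: eval_nat_numeral)
next
  fix K assume "has_binary_factorization n 4 K base_matrix"
  moreover have "fooling_set n 4 base_matrix {(0, 1), (1, 2), (2, 0), (3, 3)}"
    using assms by (simp add: fooling_set_def base_matrix_def)
  ultimately have "card {(0::nat, 1::nat), (1, 2), (2, 0), (3, 3)} \<le> K"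
    by (rule fooling_set_card_le[rotated])
  then show "4 \<le> K" by simp
qed

lemma binary_rank_base_matrix_extra_column:
  assumes "4 \<le> n"
  shows "binary_rank n 5 (append_cols 4 base_matrix (\<lambda>_. extra_column q)) = 4"
proof (rule binary_rank_eqI)
  let ?M = "append_cols 4 base_matrix (\<lambda>_. extra_column q)"
  let ?R = "\<lambda>t i. i = t \<or> (i = 4 + q \<and> t \<le> 1) \<or> (4 \<le> i \<and> i \<noteq> 4 + q \<and> 2 \<le> t)"
  let ?C = "\<lambda>t j. ?M t j \<noteq> 0"
  have "has_binary_factorization n 5 (card {0, 1, 2, 3 :: nat}) ?M"
  proof (rule has_binary_factorization_rectangle_partition[where R = ?R and C = ?C])
    fix i j :: nat assume "j < 5"
    then consider "j < 4" | "j = 4" by linarith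
    then show "?M i j = of_bool (\<exists>t\<in>{0, 1, 2, 3}. ?R t i \<and> ?C t j)"
    proof cases
      case 1
      then show ?thesis by (elim less_4_cases) (simp_all add: append_cols_def base_matrix_def)
    qed (auto simp: append_cols_def extra_column_def)
  next
    fix i j t t' :: nat
    assume "j < 5" and t: "t \<in> {0, 1, 2, 3}" "t' \<in> {0, 1, 2, 3}"
      and R: "?R t i" "?R t' i" and C: "?C t j" "?C t' j"
    show "t = t'"
    proof (cases "j < 4")
      case True
      with C have "base_matrix t j \<noteq> 0" "base_matrix t' j \<noteq> 0" by (auto simp: append_cols_def)
      moreover from R t have "t \<le> 3" "t' \<le> 3" "t = t' \<or> (t \<le> 1 \<longleftrightarrow> t' \<le> 1)" by auto
      ultimately show ?thesis using True base_matrix_same_half by blast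
    next
      case False
      with C t show ?thesis by (auto simp: append_cols_def extra_column_def)
    qed
  qed simp
  then show "has_binary_factorization n 5 4 ?M" by (simp add: eval_nat_numeral)
next
  fix K assume "has_binary_factorization n 5 K (append_cols 4 base_matrix (\<lambda>_. extra_column q))"
  moreover have "fooling_set n 5 (append_cols 4 base_matrix (\<lambda>_. extra_column q)) {(0, 1), (1, 2), (2, 0), (3, 3)}"
    using assms by (simp add: fooling_set_def append_cols_def base_matrix_def)
  ultimately have "card {(0::nat, 1::nat), (1, 2), (2, 0), (3, 3)} \<le> K"
    by (rule fooling_set_card_le[rotated])
  then show "4 \<le> K" by simp
qed

lemma has_binary_factorization_all_extra_columns:
  assumes "1 \<le> k"
  shows "has_binary_factorization n (4 + k) (k + 3) (append_cols 4 base_matrix extra_column)"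
proof -
  let ?M = "append_cols 4 base_matrix extra_column"
  let ?L = "{0, 1, 2, 3} \<union> {5..<k + 4}"
  let ?R = "\<lambda>t i. (t \<le> 3 \<and> (i = t \<or> (i = 4 \<and> t \<le> 1) \<or> (5 \<le> i \<and> 2 \<le> t))) \<or> (5 \<le> t \<and> (i = 0 \<or> i = t))"
  let ?C = "\<lambda>t j. (t \<le> 3 \<and> j \<le> 4 \<and> ?M t j \<noteq> 0) \<or> (5 \<le> t \<and> j = t)"
  have "has_binary_factorization n (4 + k) (card ?L) ?M"
  proof (rule has_binary_factorization_rectangle_partition[where R = ?R and C = ?C])
    fix i j :: nat assume "j < 4 + k"
    then consider "j < 4" | "j = 4" | "j \<in> {5..<k + 4}" by fastforce
    then show "?M i j = of_bool (\<exists>t\<in>?L. ?R t i \<and> ?C t j)"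
    proof cases
      case 1
      then have "(\<exists>t\<in>?L. ?R t i \<and> ?C t j) \<longleftrightarrow> (\<exists>t\<in>{0, 1, 2, 3}. ?R t i \<and> ?C t j)" by auto
      with 1 show ?thesis by (elim less_4_cases) (simp_all add: append_cols_def base_matrix_def)
    qed (auto simp: append_cols_def extra_column_def)
  next
    fix i j t t' :: nat
    assume "j < 4 + k" "t \<in> ?L" "t' \<in> ?L" and R: "?R t i" "?R t' i" and C: "?C t j" "?C t' j"
    show "t = t'"
    proof (cases "j < 4")
      case True
      with C have "t \<le> 3" "t' \<le> 3" "base_matrix t j \<noteq> 0" "base_matrix t' j \<noteq> 0"
        by (auto simp: append_cols_def)
      moreover from R \<open>t \<le> 3\<close> \<open>t' \<le> 3\<close> have "t = t' \<or> (t \<le> 1 \<longleftrightarrow> t' \<le> 1)" by auto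
      ultimately show ?thesis using True base_matrix_same_half by blast
    next
      case False
      with C show ?thesis by (auto simp: append_cols_def extra_column_def)
    qed
  qed simp
  moreover have "card ?L = k + 3"
    using assms by (subst card_Un_disjoint) auto
  ultimately show ?thesis by metis
qed

lemma fooling_set_all_extra_columns:
  assumes "k + 4 \<le> n"
  shows "fooling_set n (4 + k) (append_cols 4 base_matrix extra_column)
    ({(1, 2), (2, 0), (3, 3)} \<union> (\<lambda>i. (i, i)) ` {4..<k + 4})"
  using assms
  by (auto simp: fooling_set_def append_cols_def base_matrix_def extra_column_def)

lemma binary_rank_all_extra_columns:
  assumes "1 \<le> k" "k + 4 \<le> n"
  shows "binary_rank n (4 + k) (append_cols 4 base_matrix extra_column) = k + 3"
proof (rule binary_rank_eqI[OF has_binary_factorization_all_extra_columns[OF assms(1)]])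
  fix K assume fact: "has_binary_factorization n (4 + k) K (append_cols 4 base_matrix extra_column)"
  have "card ({(1, 2), (2, 0), (3, 3)} \<union> (\<lambda>i. (i, i)) ` {4..<k + 4}) = 3 + k"
    by (subst card_Un_disjoint) (auto simp: card_image inj_on_def)
  with fooling_set_card_le[OF fooling_set_all_extra_columns[OF assms(2)] fact]
  show "k + 3 \<le> K" by simp
qed

theorem theorem5:
  fixes k :: nat
  assumes "k \<ge> 1"
  shows "\<exists>(n::nat) (m::nat) (A::nat \<Rightarrow> nat \<Rightarrow> nat) (X::nat \<Rightarrow> nat \<Rightarrow> nat).
           binary_matrix n m A \<and>
           (\<forall>l<k. \<forall>i<n. X l i \<in> {0, 1}) \<and>
           binary_rank n m A = 4 \<and>
           (\<forall>l<k. binary_rank n (m + 1) (append_cols m A (\<lambda>_. X l)) = 4) \<and>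
           binary_rank n (m + k) (append_cols m A X) = k + 3"
proof (intro exI conjI)
  show "binary_matrix (k + 4) 4 base_matrix"
    by (simp add: binary_matrix_def base_matrix_def)
  show "\<forall>l<k. \<forall>i<k + 4. extra_column l i \<in> {0, 1}"
    by (simp add: extra_column_def)
  show "binary_rank (k + 4) 4 base_matrix = 4"
    by (simp add: binary_rank_base_matrix)
  show "\<forall>l<k. binary_rank (k + 4) (4 + 1) (append_cols 4 base_matrix (\<lambda>_. extra_column l)) = 4"
    by (simp add: binary_rank_base_matrix_extra_column)
  show "binary_rank (k + 4) (4 + k) (append_cols 4 base_matrix extra_column) = k + 3"
    using assms by (simp add: binary_rank_all_extra_columns)
qed

end
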